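(* Let $\Omega\subset\mathbb{R}^n$ be bounded and open, and let $\mathcal{A}_0$ be the class of (equivalence classes of) nets of semilinear operators described in the context. Let $A\in\mathcal{A}_0$ with representative $(A_\epsilon)$, and let $u\in\mathcal{G}(\overline{\Omega})$ be such that for every representative $(u_\epsilon)$ of $u$ there exist $\epsilon_0\in(0,1]$, $C>0$ and $m\in\mathbb{N}$ with $\inf_{x\in\overline{\Omega}}|u_\epsilon(x)|\ge C\epsilon^m$ for all $\epsilon\in(0,\epsilon_0)$. Then $(A_\epsilon u_\epsilon)\in\mathcal{E}_M(\overline{\Omega})$ and its class $[(A_\epsilon u_\epsilon)]\in\mathcal{G}(\overline{\Omega})$ does not depend on the choice of representative $(A_\epsilon)$ of $A$ nor on the choice of representative $(u_\epsilon)$ of $u$. Hence $Au:=[(A_\epsilon u_\epsilon)]$ is a well-defined differential operator from (such elements of) $\mathcal{G}(\overline{\Omega})$ to $\mathcal{G}(\overline{\Omega})$.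
   Context: $\mathcal{E}_M(\overline{\Omega})$: nets $(u_\epsilon)_{\epsilon\in(0,1]}\subset C^\infty(\overline{\Omega})$ such that for every $k\in\mathbb{N}$ there is $a\in\mathbb{R}$ with $\sup_{|\beta|\le k,x\in\overline{\Omega}}|D^\beta u_\epsilon(x)|=O(\epsilon^a)$ as $\epsilon\to0$; $\mathcal{N}(\overline{\Omega})$: nets in $\mathcal{E}_M(\overline{\Omega})$ for which this holds for every $a\in\mathbb{R}$; $\mathcal{G}(\overline{\Omega})=\mathcal{E}_M(\overline{\Omega})/\mathcal{N}(\overline{\Omega})$ with componentwise sums, products and derivatives. Fix integers $n_1,\dots,n_K\in\mathbb{Z}$. $\mathcal{A}$ is the family of nets of operators $A_\epsilon u=-\sum_{i,j=1}^N D_i(a^{ij}_\epsilon D_ju)+\sum_{i=1}^K b^i_\epsilon u^{n_i}$ with $(a^{ij}_\epsilon),(b^i_\epsilon)\in\mathcal{E}_M(\overline{\Omega})$. Two such nets $(A_\epsilon),(\overline{A}_\epsilon)$ (with coefficients $a^{ij}_\epsilon,b^i_\epsilon$ and $\overline{a}^{ij}_\epsilon,\overline{b}^i_\epsilon$) are equivalent if $(a^{ij}_\epsilon-\overline{a}^{ij}_\epsilon)$ and $(b^i_\epsilon-\overline{b}^i_\epsilon)$ belong to $\mathcal{N}(\overline{\Omega})$ for all $i,j$; $\mathcal{A}_0$ is the set of equivalence classes. *)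

theory Defs
  imports "HOL-Analysis.Analysis"
begin

text \<open>Partial derivative in direction i and iterated partial derivatives D^beta,
  where a multi-index is represented by the list of directions (|beta| = length).\<close>

definition partial :: "'n::finite \<Rightarrow> (real^'n \<Rightarrow> real) \<Rightarrow> real^'n \<Rightarrow> real" where
  "partial i f x = deriv (\<lambda>t. f (x + t *\<^sub>R axis i 1)) 0"

fun Dmulti :: "'n::finite list \<Rightarrow> (real^'n \<Rightarrow> real) \<Rightarrow> real^'n \<Rightarrow> real" where
  "Dmulti [] f = f"
| "Dmulti (i # is) f = partial i (Dmulti is f)"

text \<open>C^infinity(closure Omega) for bounded open Omega: smooth on Omega with every derivative
  uniformly continuous on Omega (equivalently, extending continuously to the closure).
  Values outside Omega are irrelevant.\<close>

definition smooth_closure :: "(real^'n::finite) set \<Rightarrow> (real^'n \<Rightarrow> real) \<Rightarrow> bool" where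
  "smooth_closure \<Omega> f \<longleftrightarrow>
     (\<forall>\<beta>. \<forall>x\<in>\<Omega>. Dmulti \<beta> f differentiable (at x)) \<and>
     (\<forall>\<beta>. uniformly_continuous_on \<Omega> (Dmulti \<beta> f))"

text \<open>Nets (u_eps), eps in (0,1], are functions real => real^'n => real.\<close>

definition moderate :: "(real^'n::finite) set \<Rightarrow> (real \<Rightarrow> real^'n \<Rightarrow> real) \<Rightarrow> bool" where
  "moderate \<Omega> u \<longleftrightarrow>
     (\<exists>\<epsilon>0>0. \<forall>\<epsilon>\<in>{0<..<\<epsilon>0}. smooth_closure \<Omega> (u \<epsilon>)) \<and>
     (\<forall>k::nat. \<exists>a::real. \<exists>C \<epsilon>0. \<epsilon>0 > 0 \<and>
        (\<forall>\<epsilon>\<in>{0<..<\<epsilon>0}. \<forall>\<beta> x. length \<beta> \<le> k \<and> x \<in> \<Omega> \<longrightarrow>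
            \<bar>Dmulti \<beta> (u \<epsilon>) x\<bar> \<le> C * \<epsilon> powr a))"

definition negligible :: "(real^'n::finite) set \<Rightarrow> (real \<Rightarrow> real^'n \<Rightarrow> real) \<Rightarrow> bool" where
  "negligible \<Omega> u \<longleftrightarrow> moderate \<Omega> u \<and>
     (\<forall>k::nat. \<forall>a::real. \<exists>C \<epsilon>0. \<epsilon>0 > 0 \<and>
        (\<forall>\<epsilon>\<in>{0<..<\<epsilon>0}. \<forall>\<beta> x. length \<beta> \<le> k \<and> x \<in> \<Omega> \<longrightarrow>
            \<bar>Dmulti \<beta> (u \<epsilon>) x\<bar> \<le> C * \<epsilon> powr a))"

definition gequiv :: "(real^'n::finite) set \<Rightarrow> (real \<Rightarrow> real^'n \<Rightarrow> real) \<Rightarrow> (real \<Rightarrow> real^'n \<Rightarrow> real) \<Rightarrow> bool" where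
  "gequiv \<Omega> u v \<longleftrightarrow> negligible \<Omega> (\<lambda>\<epsilon> x. u \<epsilon> x - v \<epsilon> x)"

definition semilin_op ::
  "nat \<Rightarrow> (nat \<Rightarrow> int) \<Rightarrow> ('n::finite \<Rightarrow> 'n \<Rightarrow> real \<Rightarrow> real^'n \<Rightarrow> real) \<Rightarrow>
   (nat \<Rightarrow> real \<Rightarrow> real^'n \<Rightarrow> real) \<Rightarrow> real \<Rightarrow> (real^'n \<Rightarrow> real) \<Rightarrow> real^'n \<Rightarrow> real" where
  "semilin_op K ns a b \<epsilon> u x =
     - (\<Sum>i\<in>UNIV. \<Sum>j\<in>UNIV. partial i (\<lambda>y. a i j \<epsilon> y * partial j u y) x)
     + (\<Sum>l\<in>{1..K}. b l \<epsilon> x * power_int (u x) (ns l))"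

definition admissible_coeffs ::
  "(real^'n::finite) set \<Rightarrow> nat \<Rightarrow> ('n \<Rightarrow> 'n \<Rightarrow> real \<Rightarrow> real^'n \<Rightarrow> real) \<Rightarrow>
   (nat \<Rightarrow> real \<Rightarrow> real^'n \<Rightarrow> real) \<Rightarrow> bool" where
  "admissible_coeffs \<Omega> K a b \<longleftrightarrow>
     (\<forall>i j. moderate \<Omega> (a i j)) \<and> (\<forall>l\<in>{1..K}. moderate \<Omega> (b l))"

definition op_equiv ::
  "(real^'n::finite) set \<Rightarrow> nat \<Rightarrow> ('n \<Rightarrow> 'n \<Rightarrow> real \<Rightarrow> real^'n \<Rightarrow> real) \<Rightarrow>
   (nat \<Rightarrow> real \<Rightarrow> real^'n \<Rightarrow> real) \<Rightarrow> ('n \<Rightarrow> 'n \<Rightarrow> real \<Rightarrow> real^'n \<Rightarrow> real) \<Rightarrow>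
   (nat \<Rightarrow> real \<Rightarrow> real^'n \<Rightarrow> real) \<Rightarrow> bool" where
  "op_equiv \<Omega> K a b a' b' \<longleftrightarrow>
     (\<forall>i j. gequiv \<Omega> (a i j) (a' i j)) \<and> (\<forall>l\<in>{1..K}. gequiv \<Omega> (b l) (b' l))"

end

theory Submission
  imports Defs
begin

text \<open>Moderate nets form a differential algebra on which negligible nets form a differential
  ideal; the derivative bounds behind this come from the Leibniz rule, which costs a factor
  \<open>2^k\<close> for derivatives of order \<open>k\<close>. A net bounded below by \<open>C \<epsilon>^m\<close> has a moderate
  inverse, because \<open>\<partial>(1/u) = -\<partial>u/u\<^sup>2\<close> bounds the derivatives of \<open>1/u\<close> inductively by
  negative powers of \<open>\<epsilon>\<close>, and \<open>1/u - 1/v = (v - u)/(u v)\<close> shows that inversion respects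
  negligible differences. As the lower bound holds for every representative of \<open>u\<close>, the
  negative powers \<open>u^n\<^sub>l\<close> are well defined on the class, and \<open>A\<^sub>\<epsilon> u\<^sub>\<epsilon>\<close> is built from the
  coefficients and \<open>u\<close> by exactly these operations.\<close>

section \<open>Partial derivatives\<close>

lemma has_real_derivative_partial:
  fixes f :: "real^'n::finite \<Rightarrow> real"
  assumes "f differentiable (at x)"
  shows "((\<lambda>t. f (x + t *\<^sub>R axis i 1)) has_real_derivative partial i f x) (at 0)"
proof -
  have "((\<lambda>t::real. x + t *\<^sub>R axis i 1) has_derivative (\<lambda>t. t *\<^sub>R axis i 1)) (at 0)"
    by (auto intro!: derivative_eq_intros)
  then have "(\<lambda>t::real. x + t *\<^sub>R axis i 1) differentiable (at 0)"
    by (rule differentiableI)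
  moreover have "f differentiable at ((\<lambda>t::real. x + t *\<^sub>R axis i 1) 0)"
    using assms by simp
  ultimately have "(f \<circ> (\<lambda>t. x + t *\<^sub>R axis i 1)) differentiable at 0"
    by (rule differentiable_chain_at)
  then show ?thesis
    unfolding partial_def using DERIV_deriv_iff_real_differentiable by (simp add: o_def)
qed

lemma partial_cong:
  fixes f g :: "real^'n::finite \<Rightarrow> real"
  assumes "open \<Omega>" "\<And>y. y \<in> \<Omega> \<Longrightarrow> f y = g y" "x \<in> \<Omega>"
  shows "partial i f x = partial i g x"
proof -
  obtain e where e: "e > 0" "ball x e \<subseteq> \<Omega>"
    using assms by (meson openE)
  have "\<forall>\<^sub>F t in nhds 0. f (x + t *\<^sub>R axis i 1) = g (x + t *\<^sub>R axis i 1)"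
    unfolding eventually_nhds_metric
  proof (intro exI[of _ e] conjI allI impI)
    fix t :: real
    assume "dist t 0 < e"
    then have "x + t *\<^sub>R axis i 1 \<in> ball x e"
      by (simp add: dist_norm norm_axis_1)
    then show "f (x + t *\<^sub>R axis i 1) = g (x + t *\<^sub>R axis i 1)"
      using e assms(2) by blast
  qed (rule e)
  then show ?thesis
    unfolding partial_def by (rule deriv_cong_ev) simp
qed

lemma Dmulti_cong:
  fixes f g :: "real^'n::finite \<Rightarrow> real"
  assumes "open \<Omega>" "\<And>y. y \<in> \<Omega> \<Longrightarrow> f y = g y" "x \<in> \<Omega>"
  shows "Dmulti \<beta> f x = Dmulti \<beta> g x"
  using assms(3)
proof (induction \<beta> arbitrary: x)
  case Nil
  then show ?case using assms(2) by simp
next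
  case (Cons i \<beta>)
  then show ?case by (simp add: partial_cong[OF assms(1) Cons.IH])
qed

lemma Dmulti_snoc: "Dmulti (\<beta> @ [i]) f = Dmulti \<beta> (partial i f)"
  by (induction \<beta>) auto

lemma partial_add:
  fixes f g :: "real^'n::finite \<Rightarrow> real"
  assumes "f differentiable (at x)" "g differentiable (at x)"
  shows "partial i (\<lambda>y. f y + g y) x = partial i f x + partial i g x"
  unfolding partial_def[of i "\<lambda>y. f y + g y"]
  using DERIV_add[OF has_real_derivative_partial[OF assms(1)] has_real_derivative_partial[OF assms(2)]]
  by (rule DERIV_imp_deriv)

lemma partial_diff:
  fixes f g :: "real^'n::finite \<Rightarrow> real"
  assumes "f differentiable (at x)" "g differentiable (at x)"
  shows "partial i (\<lambda>y. f y - g y) x = partial i f x - partial i g x"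
  unfolding partial_def[of i "\<lambda>y. f y - g y"]
  using DERIV_diff[OF has_real_derivative_partial[OF assms(1)] has_real_derivative_partial[OF assms(2)]]
  by (rule DERIV_imp_deriv)

lemma partial_cmult:
  fixes f :: "real^'n::finite \<Rightarrow> real"
  assumes "f differentiable (at x)"
  shows "partial i (\<lambda>y. c * f y) x = c * partial i f x"
  unfolding partial_def[of i "\<lambda>y. c * f y"]
  using DERIV_cmult[OF has_real_derivative_partial[OF assms]] by (rule DERIV_imp_deriv)

lemma partial_mult:
  fixes f g :: "real^'n::finite \<Rightarrow> real"
  assumes "f differentiable (at x)" "g differentiable (at x)"
  shows "partial i (\<lambda>y. f y * g y) x = partial i f x * g x + f x * partial i g x"
proof -
  have "((\<lambda>t. f (x + t *\<^sub>R axis i 1) * g (x + t *\<^sub>R axis i 1)) has_real_derivative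
      partial i f x * g x + f x * partial i g x) (at 0)"
    using DERIV_mult[OF has_real_derivative_partial[OF assms(1)] has_real_derivative_partial[OF assms(2)]]
    by (simp add: algebra_simps)
  then show ?thesis
    unfolding partial_def by (rule DERIV_imp_deriv)
qed

lemma partial_inverse:
  fixes f :: "real^'n::finite \<Rightarrow> real"
  assumes "f differentiable (at x)" "f x \<noteq> 0"
  shows "partial i (\<lambda>y. inverse (f y)) x = (-1) * (partial i f x * (inverse (f x) * inverse (f x)))"
proof -
  have "((\<lambda>t. inverse (f (x + t *\<^sub>R axis i 1))) has_real_derivative
      - (partial i f x * (inverse (f x) * inverse (f x)))) (at 0)"
    using DERIV_inverse_fun[OF has_real_derivative_partial[OF assms(1)]] assms(2) by simp
  then show ?thesis
    unfolding partial_def by (simp add: DERIV_imp_deriv)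
qed

lemma partial_const: "partial i (\<lambda>y. c) = (\<lambda>x. 0)"
  unfolding partial_def by (auto intro!: DERIV_imp_deriv)

lemma Dmulti_const: "Dmulti \<beta> (\<lambda>y. c) = (\<lambda>x. if \<beta> = [] then c else 0)"
  by (induction \<beta>) (auto simp: partial_const)

section \<open>Derivative bounds up to a given order\<close>

lemma uniformly_continuous_on_mult_bounded:
  fixes f g :: "'a::metric_space \<Rightarrow> real"
  assumes uf: "uniformly_continuous_on \<Omega> f" and ug: "uniformly_continuous_on \<Omega> g"
    and bf: "\<And>x. x \<in> \<Omega> \<Longrightarrow> \<bar>f x\<bar> \<le> B" and bg: "\<And>x. x \<in> \<Omega> \<Longrightarrow> \<bar>g x\<bar> \<le> B" and B: "B > 0"
  shows "uniformly_continuous_on \<Omega> (\<lambda>x. f x * g x)"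
  unfolding uniformly_continuous_on_def
proof (intro allI impI)
  fix e :: real
  assume "e > 0"
  then have e2: "e / (2*B) > 0" using B by simp
  obtain d1 where d1: "d1 > 0" "\<forall>x\<in>\<Omega>. \<forall>x'\<in>\<Omega>. dist x' x < d1 \<longrightarrow> dist (f x') (f x) < e / (2*B)"
    using uf e2 unfolding uniformly_continuous_on_def by meson
  obtain d2 where d2: "d2 > 0" "\<forall>x\<in>\<Omega>. \<forall>x'\<in>\<Omega>. dist x' x < d2 \<longrightarrow> dist (g x') (g x) < e / (2*B)"
    using ug e2 unfolding uniformly_continuous_on_def by meson
  show "\<exists>d>0. \<forall>x\<in>\<Omega>. \<forall>x'\<in>\<Omega>. dist x' x < d \<longrightarrow> dist (f x' * g x') (f x * g x) < e"
  proof (intro exI[of _ "min d1 d2"] conjI ballI impI)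
    show "min d1 d2 > 0" using d1 d2 by simp
    fix x x'
    assume x: "x \<in> \<Omega>" "x' \<in> \<Omega>" and "dist x' x < min d1 d2"
    then have df: "\<bar>f x' - f x\<bar> < e/(2*B)" and dg: "\<bar>g x' - g x\<bar> < e/(2*B)"
      using d1 d2 by (auto simp: dist_real_def)
    have "f x' * g x' - f x * g x = f x' * (g x' - g x) + g x * (f x' - f x)"
      by (simp add: algebra_simps)
    then have "\<bar>f x' * g x' - f x * g x\<bar> \<le> \<bar>f x'\<bar> * \<bar>g x' - g x\<bar> + \<bar>g x\<bar> * \<bar>f x' - f x\<bar>"
      by (simp add: abs_mult[symmetric] abs_triangle_ineq)
    also have "\<dots> \<le> B * \<bar>g x' - g x\<bar> + B * \<bar>f x' - f x\<bar>"
      using bf bg x by (intro add_mono mult_right_mono) auto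
    also have "\<dots> < B * (e/(2*B)) + B * (e/(2*B))"
      using df dg B by (intro add_strict_mono mult_strict_left_mono) auto
    also have "\<dots> = e" using B by (simp add: field_simps)
    finally show "dist (f x' * g x') (f x * g x) < e" by (simp add: dist_real_def)
  qed
qed

lemma uniformly_continuous_on_inverse_bounded_below:
  fixes f :: "'a::metric_space \<Rightarrow> real"
  assumes uf: "uniformly_continuous_on \<Omega> f" and c: "c > 0" and lb: "\<And>x. x \<in> \<Omega> \<Longrightarrow> c \<le> \<bar>f x\<bar>"
  shows "uniformly_continuous_on \<Omega> (\<lambda>x. inverse (f x))"
  unfolding uniformly_continuous_on_def
proof (intro allI impI)
  fix e :: real
  assume "e > 0"
  then have "e * (c*c) > 0" using c by simp
  then obtain d where d: "d > 0" "\<forall>x\<in>\<Omega>. \<forall>x'\<in>\<Omega>. dist x' x < d \<longrightarrow> dist (f x') (f x) < e * (c*c)"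
    using uf unfolding uniformly_continuous_on_def by meson
  show "\<exists>d>0. \<forall>x\<in>\<Omega>. \<forall>x'\<in>\<Omega>. dist x' x < d \<longrightarrow> dist (inverse (f x')) (inverse (f x)) < e"
  proof (intro exI[of _ d] conjI ballI impI)
    show "d > 0" by (rule d)
    fix x x'
    assume x: "x \<in> \<Omega>" "x' \<in> \<Omega>" and "dist x' x < d"
    then have df: "\<bar>f x' - f x\<bar> < e * (c*c)" using d by (auto simp: dist_real_def)
    have fx: "c \<le> \<bar>f x\<bar>" "c \<le> \<bar>f x'\<bar>" using lb x by auto
    then have "inverse (f x') - inverse (f x) = (f x - f x') / (f x' * f x)"
      using c by (simp add: field_simps)
    then have "\<bar>inverse (f x') - inverse (f x)\<bar> = \<bar>f x' - f x\<bar> / (\<bar>f x'\<bar> * \<bar>f x\<bar>)"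
      by (simp add: abs_mult abs_minus_commute)
    also have "\<dots> \<le> \<bar>f x' - f x\<bar> / (c * c)"
      using fx c by (intro divide_left_mono mult_mono) auto
    also have "\<dots> < e" using df c by (simp add: field_simps)
    finally show "dist (inverse (f x')) (inverse (f x)) < e" by (simp add: dist_real_def)
  qed
qed

definition smooth_upto :: "(real^'n::finite) set \<Rightarrow> nat \<Rightarrow> (real^'n \<Rightarrow> real) \<Rightarrow> bool" where
  "smooth_upto \<Omega> n f \<longleftrightarrow> (\<forall>\<beta>. length \<beta> \<le> n \<longrightarrow>
     (\<forall>x\<in>\<Omega>. Dmulti \<beta> f differentiable (at x)) \<and> uniformly_continuous_on \<Omega> (Dmulti \<beta> f))"

definition derivs_bounded :: "(real^'n::finite) set \<Rightarrow> nat \<Rightarrow> (real^'n \<Rightarrow> real) \<Rightarrow> real \<Rightarrow> bool" where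
  "derivs_bounded \<Omega> n f M \<longleftrightarrow> (\<forall>\<beta>. length \<beta> \<le> n \<longrightarrow> (\<forall>x\<in>\<Omega>. \<bar>Dmulti \<beta> f x\<bar> \<le> M))"

lemma all_Dmulti_Suc_iff:
  "(\<forall>\<beta>. length \<beta> \<le> Suc n \<longrightarrow> P (Dmulti \<beta> f)) \<longleftrightarrow>
     P f \<and> (\<forall>i \<beta>. length \<beta> \<le> n \<longrightarrow> P (Dmulti \<beta> (partial i f)))"
proof (intro iffI conjI allI impI)
  fix i and \<beta> :: "'a list"
  assume "\<forall>\<beta>. length \<beta> \<le> Suc n \<longrightarrow> P (Dmulti \<beta> f)" "length \<beta> \<le> n"
  then show "P (Dmulti \<beta> (partial i f))"
    by (metis Dmulti_snoc length_append_singleton Suc_le_mono)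
next
  fix \<beta> :: "'a list"
  assume "P f \<and> (\<forall>i \<beta>. length \<beta> \<le> n \<longrightarrow> P (Dmulti \<beta> (partial i f)))" "length \<beta> \<le> Suc n"
  then show "P (Dmulti \<beta> f)"
    by (cases \<beta> rule: rev_cases) (auto simp: Dmulti_snoc)
qed (metis Dmulti.simps(1) list.size(3) zero_le)

lemma smooth_upto_0:
  "smooth_upto \<Omega> 0 f \<longleftrightarrow> (\<forall>x\<in>\<Omega>. f differentiable (at x)) \<and> uniformly_continuous_on \<Omega> f"
  by (simp add: smooth_upto_def)

lemma smooth_upto_Suc:
  "smooth_upto \<Omega> (Suc n) f \<longleftrightarrow>
     (\<forall>x\<in>\<Omega>. f differentiable (at x)) \<and> uniformly_continuous_on \<Omega> f \<and>
     (\<forall>i. smooth_upto \<Omega> n (partial i f))"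
  unfolding smooth_upto_def
  using all_Dmulti_Suc_iff[where P = "\<lambda>g. (\<forall>x\<in>\<Omega>. g differentiable (at x)) \<and> uniformly_continuous_on \<Omega> g"]
  by auto

lemma derivs_bounded_0: "derivs_bounded \<Omega> 0 f M \<longleftrightarrow> (\<forall>x\<in>\<Omega>. \<bar>f x\<bar> \<le> M)"
  by (simp add: derivs_bounded_def)

lemma derivs_bounded_Suc:
  "derivs_bounded \<Omega> (Suc n) f M \<longleftrightarrow>
     (\<forall>x\<in>\<Omega>. \<bar>f x\<bar> \<le> M) \<and> (\<forall>i. derivs_bounded \<Omega> n (partial i f) M)"
  unfolding derivs_bounded_def
  using all_Dmulti_Suc_iff[where P = "\<lambda>g. \<forall>x\<in>\<Omega>. \<bar>g x\<bar> \<le> M"] by auto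

lemma smooth_upto_mono: "smooth_upto \<Omega> n f \<Longrightarrow> m \<le> n \<Longrightarrow> smooth_upto \<Omega> m f"
  unfolding smooth_upto_def by auto

lemma smooth_upto_SucD: "smooth_upto \<Omega> (Suc n) f \<Longrightarrow> smooth_upto \<Omega> n f"
  by (simp add: smooth_upto_mono)

lemma smooth_upto_differentiable: "smooth_upto \<Omega> n f \<Longrightarrow> x \<in> \<Omega> \<Longrightarrow> f differentiable (at x)"
  using smooth_upto_mono[of \<Omega> n f 0] by (simp add: smooth_upto_0)

lemma smooth_upto_uniformly_continuous: "smooth_upto \<Omega> n f \<Longrightarrow> uniformly_continuous_on \<Omega> f"
  using smooth_upto_mono[of \<Omega> n f 0] by (simp add: smooth_upto_0)

lemma derivs_bounded_mono:
  "derivs_bounded \<Omega> n f M \<Longrightarrow> m \<le> n \<Longrightarrow> M \<le> M' \<Longrightarrow> derivs_bounded \<Omega> m f M'"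
  unfolding derivs_bounded_def by (meson le_trans order_trans)

lemma derivs_bounded_SucD: "derivs_bounded \<Omega> (Suc n) f M \<Longrightarrow> derivs_bounded \<Omega> n f M"
  by (simp add: derivs_bounded_mono)

lemma derivs_bounded_nonneg: "derivs_bounded \<Omega> n f M \<Longrightarrow> x \<in> \<Omega> \<Longrightarrow> 0 \<le> M"
  unfolding derivs_bounded_def by (metis Dmulti.simps(1) abs_ge_zero le0 list.size(3) order_trans)

lemma derivs_bounded_const: "derivs_bounded \<Omega> n (\<lambda>x. c) \<bar>c\<bar>"
  by (simp add: derivs_bounded_def Dmulti_const)

lemma smooth_upto_const: "smooth_upto \<Omega> n (\<lambda>x. c)"
  by (auto simp: smooth_upto_def Dmulti_const intro: uniformly_continuous_on_const)

lemma smooth_upto_cong: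
  assumes "open \<Omega>" "smooth_upto \<Omega> n f" "\<And>x. x \<in> \<Omega> \<Longrightarrow> f x = g x"
  shows "smooth_upto \<Omega> n g"
  unfolding smooth_upto_def
proof (intro allI impI conjI ballI)
  fix \<beta> :: "'a list"
  assume "length \<beta> \<le> n"
  then have D: "\<forall>x\<in>\<Omega>. Dmulti \<beta> f differentiable (at x)" and U: "uniformly_continuous_on \<Omega> (Dmulti \<beta> f)"
    using assms(2) by (auto simp: smooth_upto_def)
  have E: "\<And>x. x \<in> \<Omega> \<Longrightarrow> Dmulti \<beta> f x = Dmulti \<beta> g x"
    using assms(1,3) by (rule Dmulti_cong)
  show "Dmulti \<beta> g differentiable (at x)" if x: "x \<in> \<Omega>" for x
  proof -
    obtain e where e: "e > 0" "ball x e \<subseteq> \<Omega>"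
      using assms(1) x by (meson openE)
    have "Dmulti \<beta> f x' = Dmulti \<beta> g x'" if "dist x' x < e" for x'
      by (metis E e(2) mem_ball dist_commute subsetD that)
    then show ?thesis
      using differentiable_transform_within[OF D[rule_format, OF x] e(1) UNIV_I] by blast
  qed
  show "uniformly_continuous_on \<Omega> (Dmulti \<beta> g)"
    using U unfolding uniformly_continuous_on_def by (simp add: E)
qed

lemma derivs_bounded_cong:
  assumes "open \<Omega>" "derivs_bounded \<Omega> n f M" "\<And>x. x \<in> \<Omega> \<Longrightarrow> f x = g x"
  shows "derivs_bounded \<Omega> n g M"
proof -
  have "Dmulti \<beta> f x = Dmulti \<beta> g x" if "x \<in> \<Omega>" for \<beta> x
    using assms(1,3) that by (rule Dmulti_cong)
  then show ?thesis using assms(2) by (simp add: derivs_bounded_def)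
qed

lemma smooth_upto_SucI:
  assumes "open \<Omega>" "\<forall>x\<in>\<Omega>. f differentiable (at x)" "uniformly_continuous_on \<Omega> f"
    and "\<And>i. smooth_upto \<Omega> n (D i)" "\<And>i x. x \<in> \<Omega> \<Longrightarrow> D i x = partial i f x"
  shows "smooth_upto \<Omega> (Suc n) f"
proof -
  have "smooth_upto \<Omega> n (partial i f)" for i
    using smooth_upto_cong[OF assms(1) assms(4)] assms(5) by blast
  then show ?thesis using assms(2,3) by (simp add: smooth_upto_Suc)
qed

lemma derivs_bounded_SucI:
  assumes "open \<Omega>" "\<forall>x\<in>\<Omega>. \<bar>f x\<bar> \<le> M"
    and "\<And>i. derivs_bounded \<Omega> n (D i) M" "\<And>i x. x \<in> \<Omega> \<Longrightarrow> D i x = partial i f x"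
  shows "derivs_bounded \<Omega> (Suc n) f M"
proof -
  have "derivs_bounded \<Omega> n (partial i f) M" for i
    using derivs_bounded_cong[OF assms(1) assms(3)] assms(4) by blast
  then show ?thesis using assms(2) by (simp add: derivs_bounded_Suc)
qed

lemma smooth_upto_add:
  assumes "open \<Omega>"
  shows "smooth_upto \<Omega> n f \<Longrightarrow> smooth_upto \<Omega> n g \<Longrightarrow> smooth_upto \<Omega> n (\<lambda>x. f x + g x)"
proof (induction n arbitrary: f g)
  case 0
  then show ?case by (simp add: smooth_upto_0 uniformly_continuous_on_add)
next
  case (Suc n)
  show ?case
  proof (rule smooth_upto_SucI[OF assms, where D = "\<lambda>i x. partial i f x + partial i g x"])
    show "smooth_upto \<Omega> n (\<lambda>x. partial i f x + partial i g x)" for i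
      using Suc by (simp add: smooth_upto_Suc)
    show "partial i f x + partial i g x = partial i (\<lambda>x. f x + g x) x" if "x \<in> \<Omega>" for i x
      using Suc.prems that by (simp add: partial_add smooth_upto_differentiable)
  qed (use Suc.prems in \<open>simp_all add: smooth_upto_Suc uniformly_continuous_on_add\<close>)
qed

lemma smooth_upto_cmult:
  assumes "open \<Omega>"
  shows "smooth_upto \<Omega> n f \<Longrightarrow> smooth_upto \<Omega> n (\<lambda>x. c * f x)"
proof (induction n arbitrary: f)
  case 0
  then show ?case by (simp add: smooth_upto_0 uniformly_continuous_on_cmul_left)
next
  case (Suc n)
  show ?case
  proof (rule smooth_upto_SucI[OF assms, where D = "\<lambda>i x. c * partial i f x"])
    show "smooth_upto \<Omega> n (\<lambda>x. c * partial i f x)" for i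
      using Suc by (simp add: smooth_upto_Suc)
    show "c * partial i f x = partial i (\<lambda>x. c * f x) x" if "x \<in> \<Omega>" for i x
      using Suc.prems that by (simp add: partial_cmult smooth_upto_differentiable)
  qed (use Suc.prems in \<open>simp_all add: smooth_upto_Suc uniformly_continuous_on_cmul_left\<close>)
qed

lemma smooth_upto_mult:
  assumes "open \<Omega>" "bounded \<Omega>"
  shows "smooth_upto \<Omega> n f \<Longrightarrow> smooth_upto \<Omega> n g \<Longrightarrow> smooth_upto \<Omega> n (\<lambda>x. f x * g x)"
proof (induction n arbitrary: f g)
  case 0
  then have uf: "uniformly_continuous_on \<Omega> f" and ug: "uniformly_continuous_on \<Omega> g"
    by (simp_all add: smooth_upto_0)
  obtain Bf where "Bf > 0" "\<forall>x\<in>\<Omega>. \<bar>f x\<bar> \<le> Bf"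
    using bounded_uniformly_continuous_image[OF uf assms(2)] by (auto simp: bounded_pos)
  moreover obtain Bg where "Bg > 0" "\<forall>x\<in>\<Omega>. \<bar>g x\<bar> \<le> Bg"
    using bounded_uniformly_continuous_image[OF ug assms(2)] by (auto simp: bounded_pos)
  ultimately have "uniformly_continuous_on \<Omega> (\<lambda>x. f x * g x)"
    by (intro uniformly_continuous_on_mult_bounded[OF uf ug, of "Bf + Bg"]) force+
  then show ?case
    using 0 by (simp add: smooth_upto_0)
next
  case (Suc n)
  have fg: "smooth_upto \<Omega> n f" "smooth_upto \<Omega> n g"
    using Suc.prems by (auto dest: smooth_upto_SucD)
  show ?case
  proof (rule smooth_upto_SucI[OF assms(1), where D = "\<lambda>i x. partial i f x * g x + f x * partial i g x"])
    show "smooth_upto \<Omega> n (\<lambda>x. partial i f x * g x + f x * partial i g x)" for i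
      using Suc fg by (intro smooth_upto_add[OF assms(1)] Suc.IH) (simp_all add: smooth_upto_Suc)
    show "partial i f x * g x + f x * partial i g x = partial i (\<lambda>x. f x * g x) x" if "x \<in> \<Omega>" for i x
      using Suc.prems that by (simp add: partial_mult smooth_upto_differentiable)
    show "\<forall>x\<in>\<Omega>. (\<lambda>x. f x * g x) differentiable (at x)"
      using Suc.prems by (simp add: smooth_upto_differentiable)
    show "uniformly_continuous_on \<Omega> (\<lambda>x. f x * g x)"
      using Suc.IH[OF fg] by (rule smooth_upto_uniformly_continuous)
  qed
qed

lemma smooth_upto_inverse:
  assumes "open \<Omega>" "bounded \<Omega>" "c > 0" "\<And>x. x \<in> \<Omega> \<Longrightarrow> c \<le> \<bar>f x\<bar>"
  shows "smooth_upto \<Omega> n f \<Longrightarrow> smooth_upto \<Omega> n (\<lambda>x. inverse (f x))"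
proof (induction n)
  case 0
  have "\<forall>x\<in>\<Omega>. f x \<noteq> 0" using assms(3,4) by force
  moreover have "uniformly_continuous_on \<Omega> (\<lambda>x. inverse (f x))"
    using 0 assms(3,4) by (intro uniformly_continuous_on_inverse_bounded_below) (simp_all add: smooth_upto_0)
  ultimately show ?case
    using 0 by (simp add: smooth_upto_0 differentiable_inverse)
next
  case (Suc n)
  have nz: "f x \<noteq> 0" if "x \<in> \<Omega>" for x
    using assms(3) assms(4)[OF that] by linarith
  have IH: "smooth_upto \<Omega> n (\<lambda>x. inverse (f x))"
    using Suc.IH Suc.prems by (auto dest: smooth_upto_SucD)
  show ?case
  proof (rule smooth_upto_SucI[OF assms(1),
        where D = "\<lambda>i x. (-1) * (partial i f x * (inverse (f x) * inverse (f x)))"])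
    show "smooth_upto \<Omega> n (\<lambda>x. (-1) * (partial i f x * (inverse (f x) * inverse (f x))))" for i
      using Suc.prems IH
      by (intro smooth_upto_cmult[OF assms(1)] smooth_upto_mult[OF assms(1,2)]) (simp_all add: smooth_upto_Suc)
    show "(-1) * (partial i f x * (inverse (f x) * inverse (f x))) = partial i (\<lambda>x. inverse (f x)) x"
      if "x \<in> \<Omega>" for i x
      using Suc.prems that nz by (simp add: partial_inverse smooth_upto_differentiable)
    show "\<forall>x\<in>\<Omega>. (\<lambda>x. inverse (f x)) differentiable (at x)"
      using Suc.prems nz by (simp add: smooth_upto_differentiable differentiable_inverse)
    show "uniformly_continuous_on \<Omega> (\<lambda>x. inverse (f x))"
      using IH by (rule smooth_upto_uniformly_continuous)
  qed
qed

lemma derivs_bounded_add: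
  assumes "open \<Omega>"
  shows "smooth_upto \<Omega> n f \<Longrightarrow> smooth_upto \<Omega> n g \<Longrightarrow> derivs_bounded \<Omega> n f Mf \<Longrightarrow>
    derivs_bounded \<Omega> n g Mg \<Longrightarrow> derivs_bounded \<Omega> n (\<lambda>x. f x + g x) (Mf + Mg)"
proof (induction n arbitrary: f g)
  case 0
  then show ?case
    unfolding derivs_bounded_0 by (meson abs_triangle_ineq add_mono order_trans)
next
  case (Suc n)
  show ?case
    by (rule derivs_bounded_SucI[OF assms, where D = "\<lambda>i x. partial i f x + partial i g x"])
      (use Suc in \<open>auto simp: smooth_upto_Suc derivs_bounded_Suc partial_add
        intro: order_trans[OF abs_triangle_ineq add_mono]\<close>)
qed

lemma derivs_bounded_cmult:
  assumes "open \<Omega>"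
  shows "smooth_upto \<Omega> n f \<Longrightarrow> derivs_bounded \<Omega> n f M \<Longrightarrow> derivs_bounded \<Omega> n (\<lambda>x. c * f x) (\<bar>c\<bar> * M)"
proof (induction n arbitrary: f)
  case 0
  then show ?case by (simp add: derivs_bounded_0 abs_mult mult_left_mono)
next
  case (Suc n)
  show ?case
    by (rule derivs_bounded_SucI[OF assms, where D = "\<lambda>i x. c * partial i f x"])
      (use Suc in \<open>auto simp: smooth_upto_Suc derivs_bounded_Suc partial_cmult abs_mult mult_left_mono\<close>)
qed

lemma derivs_bounded_mult:
  assumes "open \<Omega>" "bounded \<Omega>"
  shows "smooth_upto \<Omega> n f \<Longrightarrow> smooth_upto \<Omega> n g \<Longrightarrow> derivs_bounded \<Omega> n f Mf \<Longrightarrow>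
    derivs_bounded \<Omega> n g Mg \<Longrightarrow> derivs_bounded \<Omega> n (\<lambda>x. f x * g x) (2^n * Mf * Mg)"
proof (induction n arbitrary: f g)
  case 0
  then show ?case
    unfolding derivs_bounded_0 by (simp add: abs_mult mult_mono' order_trans[OF abs_ge_zero])
next
  case (Suc n)
  show ?case
  proof (cases "\<Omega> = {}")
    case True
    then show ?thesis by (simp add: derivs_bounded_def)
  next
    case False
    then have "0 \<le> Mf" "0 \<le> Mg"
      using Suc.prems(3,4) by (auto intro: derivs_bounded_nonneg)
    then have le: "2^n * Mf * Mg \<le> 2^Suc n * Mf * Mg"
      by (intro mult_right_mono) auto
    have f: "smooth_upto \<Omega> n f" "smooth_upto \<Omega> n g"
      using Suc.prems(1,2) by (auto dest: smooth_upto_SucD)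
    have b: "derivs_bounded \<Omega> n f Mf" "derivs_bounded \<Omega> n g Mg"
      using Suc.prems(3,4) by (auto dest: derivs_bounded_SucD)
    show ?thesis
    proof (rule derivs_bounded_SucI[OF assms(1), where D = "\<lambda>i x. partial i f x * g x + f x * partial i g x"])
      have "derivs_bounded \<Omega> n (\<lambda>x. partial i f x * g x + f x * partial i g x)
          (2^n * Mf * Mg + 2^n * Mf * Mg)" for i
        using Suc.prems f b
        by (intro derivs_bounded_add[OF assms(1)] smooth_upto_mult[OF assms] Suc.IH)
          (simp_all add: smooth_upto_Suc derivs_bounded_Suc)
      then show "derivs_bounded \<Omega> n (\<lambda>x. partial i f x * g x + f x * partial i g x) (2^Suc n * Mf * Mg)"
        for i by (simp add: mult_ac)
      show "partial i f x * g x + f x * partial i g x = partial i (\<lambda>x. f x * g x) x" if "x \<in> \<Omega>" for i x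
        using Suc.prems that by (simp add: partial_mult smooth_upto_differentiable)
      have "derivs_bounded \<Omega> 0 (\<lambda>x. f x * g x) (2^Suc n * Mf * Mg)"
        by (rule derivs_bounded_mono[OF Suc.IH[OF f b] le0 le])
      then show "\<forall>x\<in>\<Omega>. \<bar>f x * g x\<bar> \<le> 2^Suc n * Mf * Mg"
        by (simp add: derivs_bounded_0)
    qed
  qed
qed

section \<open>Moderate and negligible nets\<close>

definition eventually_smooth :: "(real^'n::finite) set \<Rightarrow> (real \<Rightarrow> real^'n \<Rightarrow> real) \<Rightarrow> bool" where
  "eventually_smooth \<Omega> U \<longleftrightarrow> (\<forall>\<^sub>F \<epsilon> in at_right 0. \<forall>n. smooth_upto \<Omega> n (U \<epsilon>))"

definition derivs_bounded_by_power ::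
  "(real^'n::finite) set \<Rightarrow> (real \<Rightarrow> real^'n \<Rightarrow> real) \<Rightarrow> nat \<Rightarrow> real \<Rightarrow> bool" where
  "derivs_bounded_by_power \<Omega> U k a \<longleftrightarrow>
     (\<exists>C. \<forall>\<^sub>F \<epsilon> in at_right 0. derivs_bounded \<Omega> k (U \<epsilon>) (C * \<epsilon> powr a))"

definition power_bounded_below :: "(real^'n::finite) set \<Rightarrow> (real \<Rightarrow> real^'n \<Rightarrow> real) \<Rightarrow> bool" where
  "power_bounded_below \<Omega> U \<longleftrightarrow>
     (\<exists>c>0. \<exists>m::nat. \<forall>\<^sub>F \<epsilon> in at_right 0. \<forall>x\<in>\<Omega>. c * \<epsilon> ^ m \<le> \<bar>U \<epsilon> x\<bar>)"

lemma eventually_at_right_0_iff: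
  "(\<forall>\<^sub>F \<epsilon> in at_right 0. P \<epsilon>) \<longleftrightarrow> (\<exists>\<epsilon>0>0. \<forall>\<epsilon>\<in>{0<..<(\<epsilon>0::real)}. P \<epsilon>)"
  unfolding eventually_at_right_field by auto

lemma eventually_smooth_iff:
  "eventually_smooth \<Omega> U \<longleftrightarrow> (\<exists>\<epsilon>0>0. \<forall>\<epsilon>\<in>{0<..<\<epsilon>0}. smooth_closure \<Omega> (U \<epsilon>))"
proof -
  have "smooth_closure \<Omega> f \<longleftrightarrow> (\<forall>n. smooth_upto \<Omega> n f)" for f
    unfolding smooth_closure_def smooth_upto_def by (meson order_refl)
  then show ?thesis
    unfolding eventually_smooth_def eventually_at_right_0_iff by simp
qed

lemma derivs_bounded_by_power_iff:
  "derivs_bounded_by_power \<Omega> U k a \<longleftrightarrow>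
     (\<exists>C \<epsilon>0. \<epsilon>0 > 0 \<and> (\<forall>\<epsilon>\<in>{0<..<\<epsilon>0}. \<forall>\<beta> x. length \<beta> \<le> k \<and> x \<in> \<Omega> \<longrightarrow>
        \<bar>Dmulti \<beta> (U \<epsilon>) x\<bar> \<le> C * \<epsilon> powr a))"
  unfolding derivs_bounded_by_power_def eventually_at_right_0_iff derivs_bounded_def by blast

lemma moderate_iff:
  "moderate \<Omega> U \<longleftrightarrow> eventually_smooth \<Omega> U \<and> (\<forall>k. \<exists>a. derivs_bounded_by_power \<Omega> U k a)"
  unfolding moderate_def eventually_smooth_iff derivs_bounded_by_power_iff ..

lemma negligible_iff:
  "negligible \<Omega> U \<longleftrightarrow> moderate \<Omega> U \<and> (\<forall>k a. derivs_bounded_by_power \<Omega> U k a)"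
  unfolding negligible_def derivs_bounded_by_power_iff ..

lemma eventually_at_right_0_less_1: "\<forall>\<^sub>F \<epsilon> in at_right 0. 0 < \<epsilon> \<and> \<epsilon> < (1::real)"
  unfolding eventually_at_right_field by (intro exI[of _ 1]) auto

lemma derivs_bounded_by_powerE:
  assumes "derivs_bounded_by_power \<Omega> U k a"
  obtains C where "0 \<le> C" "\<forall>\<^sub>F \<epsilon> in at_right 0. derivs_bounded \<Omega> k (U \<epsilon>) (C * \<epsilon> powr a)"
proof -
  obtain C where "\<forall>\<^sub>F \<epsilon> in at_right 0. derivs_bounded \<Omega> k (U \<epsilon>) (C * \<epsilon> powr a)"
    using assms unfolding derivs_bounded_by_power_def by blast
  then have "\<forall>\<^sub>F \<epsilon> in at_right 0. derivs_bounded \<Omega> k (U \<epsilon>) (\<bar>C\<bar> * \<epsilon> powr a)"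
    by (rule eventually_mono) (erule derivs_bounded_mono, simp_all add: mult_right_mono)
  then show ?thesis by (intro that[of "\<bar>C\<bar>"]) simp_all
qed

lemma derivs_bounded_by_power_exponent_mono:
  assumes "derivs_bounded_by_power \<Omega> U k a" "b \<le> a"
  shows "derivs_bounded_by_power \<Omega> U k b"
proof -
  obtain C where "0 \<le> C" and ev: "\<forall>\<^sub>F \<epsilon> in at_right 0. derivs_bounded \<Omega> k (U \<epsilon>) (C * \<epsilon> powr a)"
    using assms(1) by (rule derivs_bounded_by_powerE)
  have le: "C * \<epsilon> powr a \<le> C * \<epsilon> powr b" if "0 < \<epsilon>" "\<epsilon> < 1" for \<epsilon> :: real
    using that \<open>0 \<le> C\<close> assms(2) by (intro mult_left_mono powr_mono') auto
  have "\<forall>\<^sub>F \<epsilon> in at_right 0. derivs_bounded \<Omega> k (U \<epsilon>) (C * \<epsilon> powr b)"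
    using ev eventually_at_right_0_less_1 by eventually_elim (use le in \<open>auto elim!: derivs_bounded_mono\<close>)
  then show ?thesis unfolding derivs_bounded_by_power_def ..
qed

lemma derivs_bounded_by_power_partial:
  assumes "derivs_bounded_by_power \<Omega> U (Suc k) a"
  shows "derivs_bounded_by_power \<Omega> (\<lambda>\<epsilon>. partial i (U \<epsilon>)) k a"
proof -
  obtain C where "\<forall>\<^sub>F \<epsilon> in at_right 0. derivs_bounded \<Omega> (Suc k) (U \<epsilon>) (C * \<epsilon> powr a)"
    using assms unfolding derivs_bounded_by_power_def by blast
  then have "\<forall>\<^sub>F \<epsilon> in at_right 0. derivs_bounded \<Omega> k (partial i (U \<epsilon>)) (C * \<epsilon> powr a)"
    by (rule eventually_mono) (simp add: derivs_bounded_Suc)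
  then show ?thesis unfolding derivs_bounded_by_power_def ..
qed

lemma derivs_bounded_by_power_const: "derivs_bounded_by_power \<Omega> (\<lambda>\<epsilon> x. c) k 0"
  unfolding derivs_bounded_by_power_def
  by (intro exI[of _ "\<bar>c\<bar>"] eventually_mono[OF eventually_at_right_0_less_1])
    (simp add: derivs_bounded_const)

lemma derivs_bounded_by_power_zero: "derivs_bounded_by_power \<Omega> (\<lambda>\<epsilon> x. 0) k a"
  unfolding derivs_bounded_by_power_def
  by (intro exI[of _ 0]) (simp add: derivs_bounded_def Dmulti_const)

lemma eventually_smooth_partial:
  "eventually_smooth \<Omega> U \<Longrightarrow> eventually_smooth \<Omega> (\<lambda>\<epsilon>. partial i (U \<epsilon>))"
  unfolding eventually_smooth_def by (elim eventually_mono) (meson smooth_upto_Suc)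

lemma eventually_smooth_const: "eventually_smooth \<Omega> (\<lambda>\<epsilon> x. c)"
  unfolding eventually_smooth_def by (simp add: smooth_upto_const)

lemma moderate_partial: "moderate \<Omega> U \<Longrightarrow> moderate \<Omega> (\<lambda>\<epsilon>. partial i (U \<epsilon>))"
  unfolding moderate_iff by (blast intro: eventually_smooth_partial derivs_bounded_by_power_partial)

lemma moderate_const: "moderate \<Omega> (\<lambda>\<epsilon> x. c)"
  unfolding moderate_iff by (blast intro: eventually_smooth_const derivs_bounded_by_power_const)

lemma negligible_zero: "negligible \<Omega> (\<lambda>\<epsilon> x. 0)"
  unfolding negligible_iff by (blast intro: moderate_const derivs_bounded_by_power_zero)

lemma negligible_partial: "negligible \<Omega> U \<Longrightarrow> negligible \<Omega> (\<lambda>\<epsilon>. partial i (U \<epsilon>))"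
  unfolding negligible_iff by (blast intro: moderate_partial derivs_bounded_by_power_partial)

lemma gequiv_refl: "gequiv \<Omega> U U"
  by (simp add: gequiv_def negligible_zero)

lemma power_bounded_below_nonzero:
  assumes "power_bounded_below \<Omega> U"
  shows "\<forall>\<^sub>F \<epsilon> in at_right 0. \<forall>x\<in>\<Omega>. U \<epsilon> x \<noteq> 0"
proof -
  obtain c m where c: "c > 0" and lb: "\<forall>\<^sub>F \<epsilon> in at_right 0. \<forall>x\<in>\<Omega>. c * \<epsilon> ^ m \<le> \<bar>U \<epsilon> x\<bar>"
    using assms unfolding power_bounded_below_def by blast
  show ?thesis
    using lb eventually_at_right_0_less_1
    by eventually_elim (use c in \<open>metis abs_zero not_le zero_less_mult_iff zero_less_power\<close>)
qed

lemma derivs_bounded_by_power_order_mono: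
  assumes "derivs_bounded_by_power \<Omega> U k a" "j \<le> k"
  shows "derivs_bounded_by_power \<Omega> U j a"
  using assms unfolding derivs_bounded_by_power_def
  by (auto elim!: eventually_mono intro: derivs_bounded_mono)

lemma derivs_bounded_by_power_SucI:
  fixes U :: "real \<Rightarrow> real^'n::finite \<Rightarrow> real"
  assumes "derivs_bounded_by_power \<Omega> U 0 a"
    and "\<And>i. derivs_bounded_by_power \<Omega> (\<lambda>\<epsilon>. partial i (U \<epsilon>)) k a"
  shows "derivs_bounded_by_power \<Omega> U (Suc k) a"
proof -
  obtain C0 where "0 \<le> C0" and C0: "\<forall>\<^sub>F \<epsilon> in at_right 0. derivs_bounded \<Omega> 0 (U \<epsilon>) (C0 * \<epsilon> powr a)"
    using assms(1) by (rule derivs_bounded_by_powerE)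
  have "\<exists>C. 0 \<le> C \<and> (\<forall>\<^sub>F \<epsilon> in at_right 0. derivs_bounded \<Omega> k (partial i (U \<epsilon>)) (C * \<epsilon> powr a))"
    for i
    using assms(2)[of i] by (rule derivs_bounded_by_powerE) blast
  then have "\<exists>Cs. \<forall>i. 0 \<le> Cs i \<and>
      (\<forall>\<^sub>F \<epsilon> in at_right 0. derivs_bounded \<Omega> k (partial i (U \<epsilon>)) (Cs i * \<epsilon> powr a))"
    by (intro choice allI)
  then obtain Cs where "\<And>i. 0 \<le> Cs i"
    and Cs: "\<And>i. \<forall>\<^sub>F \<epsilon> in at_right 0. derivs_bounded \<Omega> k (partial i (U \<epsilon>)) (Cs i * \<epsilon> powr a)"
    by blast
  define M where "M = C0 + (\<Sum>i\<in>UNIV. Cs i)"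
  have "Cs i \<le> (\<Sum>j\<in>UNIV. Cs j)" for i
    using \<open>\<And>i. 0 \<le> Cs i\<close> by (intro member_le_sum) auto
  then have "C0 \<le> M" "Cs i \<le> M" for i
    unfolding M_def using \<open>0 \<le> C0\<close> \<open>\<And>i. 0 \<le> Cs i\<close> by (auto intro: add_increasing add_increasing2 sum_nonneg)
  then have le: "C * \<epsilon> powr a \<le> M * \<epsilon> powr a" if "C = C0 \<or> (\<exists>i. C = Cs i)" for C \<epsilon> :: real
    using that by (auto intro: mult_right_mono)
  have "\<forall>\<^sub>F \<epsilon> in at_right 0. \<forall>i. derivs_bounded \<Omega> k (partial i (U \<epsilon>)) (Cs i * \<epsilon> powr a)"
    using Cs by (rule eventually_all_finite)
  then have "\<forall>\<^sub>F \<epsilon> in at_right 0. derivs_bounded \<Omega> (Suc k) (U \<epsilon>) (M * \<epsilon> powr a)"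
    using C0
  proof eventually_elim
    case (elim \<epsilon>)
    have "derivs_bounded \<Omega> k (partial i (U \<epsilon>)) (M * \<epsilon> powr a)" for i
      using derivs_bounded_mono[OF spec[OF elim(1), of i] order_refl le[of "Cs i" \<epsilon>]] by blast
    moreover have "derivs_bounded \<Omega> 0 (U \<epsilon>) (M * \<epsilon> powr a)"
      using derivs_bounded_mono[OF elim(2) order_refl le[of C0 \<epsilon>]] by blast
    ultimately show ?case
      by (simp add: derivs_bounded_Suc derivs_bounded_0)
  qed
  then show ?thesis unfolding derivs_bounded_by_power_def ..
qed

lemma derivs_bounded_by_power_inverse_0:
  assumes "power_bounded_below \<Omega> U"
  shows "\<exists>a. derivs_bounded_by_power \<Omega> (\<lambda>\<epsilon> x. inverse (U \<epsilon> x)) 0 a"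
proof -
  obtain c m where c: "c > 0" and lb: "\<forall>\<^sub>F \<epsilon> in at_right 0. \<forall>x\<in>\<Omega>. c * \<epsilon> ^ m \<le> \<bar>U \<epsilon> x\<bar>"
    using assms unfolding power_bounded_below_def by blast
  have "\<forall>\<^sub>F \<epsilon> in at_right 0. derivs_bounded \<Omega> 0 (\<lambda>x. inverse (U \<epsilon> x)) ((1/c) * \<epsilon> powr (- real m))"
    using lb eventually_at_right_0_less_1
  proof eventually_elim
    case (elim \<epsilon>)
    then have pos: "0 < c * \<epsilon> ^ m" using c by simp
    have "\<bar>inverse (U \<epsilon> x)\<bar> \<le> inverse (c * \<epsilon> ^ m)" if "x \<in> \<Omega>" for x
      using le_imp_inverse_le[OF elim(1)[rule_format, OF that] pos] by (simp add: abs_inverse)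
    moreover have "(1/c) * \<epsilon> powr (- real m) = inverse (c * \<epsilon> ^ m)"
      using elim by (simp add: powr_minus powr_realpow field_simps)
    ultimately show ?case by (simp add: derivs_bounded_0)
  qed
  then show ?thesis unfolding derivs_bounded_by_power_def by blast
qed

lemma power_bounded_belowI:
  assumes "\<exists>\<epsilon>0\<in>{0<..1}. \<exists>C>0. \<exists>m::nat. \<forall>\<epsilon>\<in>{0<..<\<epsilon>0}. \<forall>x\<in>\<Omega>. \<bar>U \<epsilon> x\<bar> \<ge> C * \<epsilon> ^ m"
  shows "power_bounded_below \<Omega> U"
proof -
  obtain \<epsilon>0 C m where
    "0 < \<epsilon>0" "C > 0" "\<forall>\<epsilon>\<in>{0<..<\<epsilon>0}. \<forall>x\<in>\<Omega>. C * \<epsilon> ^ m \<le> \<bar>U \<epsilon> x\<bar>"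
    using assms by (meson greaterThanAtMost_iff)
  then show ?thesis
    unfolding power_bounded_below_def eventually_at_right_0_iff by blast
qed

lemma semilin_op_eq:
  "semilin_op K ns a b \<epsilon> u =
     (\<lambda>x. - (\<Sum>i\<in>UNIV. \<Sum>j\<in>UNIV. partial i (\<lambda>y. a i j \<epsilon> y * partial j u y) x)
          + (\<Sum>l\<in>{1..K}. b l \<epsilon> x * power_int (u x) (ns l)))"
  by (simp add: fun_eq_iff semilin_op_def)

context
  fixes \<Omega> :: "(real^'n::finite) set"
  assumes open_\<Omega>: "open \<Omega>" and bounded_\<Omega>: "bounded \<Omega>"
begin

lemma eventually_smooth_add:
  assumes "eventually_smooth \<Omega> U" "eventually_smooth \<Omega> V"
  shows "eventually_smooth \<Omega> (\<lambda>\<epsilon> x. U \<epsilon> x + V \<epsilon> x)"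
  using assms unfolding eventually_smooth_def
  by eventually_elim (simp add: smooth_upto_add[OF open_\<Omega>])

lemma eventually_smooth_cmult:
  assumes "eventually_smooth \<Omega> U"
  shows "eventually_smooth \<Omega> (\<lambda>\<epsilon> x. c * U \<epsilon> x)"
  using assms unfolding eventually_smooth_def
  by eventually_elim (simp add: smooth_upto_cmult[OF open_\<Omega>])

lemma eventually_smooth_mult:
  assumes "eventually_smooth \<Omega> U" "eventually_smooth \<Omega> V"
  shows "eventually_smooth \<Omega> (\<lambda>\<epsilon> x. U \<epsilon> x * V \<epsilon> x)"
  using assms unfolding eventually_smooth_def
  by eventually_elim (simp add: smooth_upto_mult[OF open_\<Omega> bounded_\<Omega>])

lemma eventually_smooth_inverse:
  assumes "eventually_smooth \<Omega> U" "power_bounded_below \<Omega> U"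
  shows "eventually_smooth \<Omega> (\<lambda>\<epsilon> x. inverse (U \<epsilon> x))"
proof -
  obtain c m where "c > 0" and lb: "\<forall>\<^sub>F \<epsilon> in at_right 0. \<forall>x\<in>\<Omega>. c * \<epsilon> ^ m \<le> \<bar>U \<epsilon> x\<bar>"
    using assms(2) unfolding power_bounded_below_def by blast
  show ?thesis
    using assms(1) lb eventually_at_right_0_less_1 unfolding eventually_smooth_def
  proof eventually_elim
    case (elim \<epsilon>)
    then have "c * \<epsilon> ^ m > 0" using \<open>c > 0\<close> by simp
    then show ?case
      using elim by (simp add: smooth_upto_inverse[OF open_\<Omega> bounded_\<Omega>])
  qed
qed

lemma derivs_bounded_by_power_cong:
  assumes "\<forall>\<^sub>F \<epsilon> in at_right 0. \<forall>x\<in>\<Omega>. U \<epsilon> x = V \<epsilon> x" "derivs_bounded_by_power \<Omega> U k a"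
  shows "derivs_bounded_by_power \<Omega> V k a"
proof -
  obtain C where "\<forall>\<^sub>F \<epsilon> in at_right 0. derivs_bounded \<Omega> k (U \<epsilon>) (C * \<epsilon> powr a)"
    using assms(2) unfolding derivs_bounded_by_power_def by blast
  with assms(1) have "\<forall>\<^sub>F \<epsilon> in at_right 0. derivs_bounded \<Omega> k (V \<epsilon>) (C * \<epsilon> powr a)"
    by eventually_elim (simp add: derivs_bounded_cong[OF open_\<Omega>])
  then show ?thesis unfolding derivs_bounded_by_power_def ..
qed

lemma derivs_bounded_by_power_add:
  assumes "eventually_smooth \<Omega> U" "eventually_smooth \<Omega> V"
    and "derivs_bounded_by_power \<Omega> U k a" "derivs_bounded_by_power \<Omega> V k a"
  shows "derivs_bounded_by_power \<Omega> (\<lambda>\<epsilon> x. U \<epsilon> x + V \<epsilon> x) k a"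
proof -
  obtain CU CV where
    "\<forall>\<^sub>F \<epsilon> in at_right 0. derivs_bounded \<Omega> k (U \<epsilon>) (CU * \<epsilon> powr a)"
    "\<forall>\<^sub>F \<epsilon> in at_right 0. derivs_bounded \<Omega> k (V \<epsilon>) (CV * \<epsilon> powr a)"
    using assms(3,4) unfolding derivs_bounded_by_power_def by blast
  with assms(1,2)
  have "\<forall>\<^sub>F \<epsilon> in at_right 0. derivs_bounded \<Omega> k (\<lambda>x. U \<epsilon> x + V \<epsilon> x) ((CU + CV) * \<epsilon> powr a)"
    unfolding eventually_smooth_def
    by eventually_elim (simp add: derivs_bounded_add[OF open_\<Omega>] distrib_right)
  then show ?thesis unfolding derivs_bounded_by_power_def ..
qed

lemma derivs_bounded_by_power_cmult:
  assumes "eventually_smooth \<Omega> U" "derivs_bounded_by_power \<Omega> U k a"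
  shows "derivs_bounded_by_power \<Omega> (\<lambda>\<epsilon> x. c * U \<epsilon> x) k a"
proof -
  obtain C where "\<forall>\<^sub>F \<epsilon> in at_right 0. derivs_bounded \<Omega> k (U \<epsilon>) (C * \<epsilon> powr a)"
    using assms(2) unfolding derivs_bounded_by_power_def by blast
  with assms(1)
  have "\<forall>\<^sub>F \<epsilon> in at_right 0. derivs_bounded \<Omega> k (\<lambda>x. c * U \<epsilon> x) ((\<bar>c\<bar> * C) * \<epsilon> powr a)"
    unfolding eventually_smooth_def
    by eventually_elim (simp add: derivs_bounded_cmult[OF open_\<Omega>] mult.assoc)
  then show ?thesis unfolding derivs_bounded_by_power_def ..
qed

lemma derivs_bounded_by_power_mult:
  assumes "eventually_smooth \<Omega> U" "eventually_smooth \<Omega> V"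
    and "derivs_bounded_by_power \<Omega> U k a" "derivs_bounded_by_power \<Omega> V k b"
  shows "derivs_bounded_by_power \<Omega> (\<lambda>\<epsilon> x. U \<epsilon> x * V \<epsilon> x) k (a + b)"
proof -
  obtain CU CV where
    "\<forall>\<^sub>F \<epsilon> in at_right 0. derivs_bounded \<Omega> k (U \<epsilon>) (CU * \<epsilon> powr a)"
    "\<forall>\<^sub>F \<epsilon> in at_right 0. derivs_bounded \<Omega> k (V \<epsilon>) (CV * \<epsilon> powr b)"
    using assms(3,4) unfolding derivs_bounded_by_power_def by blast
  with assms(1,2) have "\<forall>\<^sub>F \<epsilon> in at_right 0.
      derivs_bounded \<Omega> k (\<lambda>x. U \<epsilon> x * V \<epsilon> x) ((2^k * CU * CV) * \<epsilon> powr (a + b))"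
    unfolding eventually_smooth_def
  proof eventually_elim
    case (elim \<epsilon>)
    then have "derivs_bounded \<Omega> k (\<lambda>x. U \<epsilon> x * V \<epsilon> x)
        (2^k * (CU * \<epsilon> powr a) * (CV * \<epsilon> powr b))"
      by (intro derivs_bounded_mult[OF open_\<Omega> bounded_\<Omega>]) simp_all
    also have "2^k * (CU * \<epsilon> powr a) * (CV * \<epsilon> powr b) = (2^k * CU * CV) * \<epsilon> powr (a + b)"
      by (simp add: powr_add mult_ac)
    finally show ?case .
  qed
  then show ?thesis unfolding derivs_bounded_by_power_def ..
qed

lemma derivs_bounded_by_power_inverse_Suc:
  assumes "eventually_smooth \<Omega> U" "power_bounded_below \<Omega> U"
    and "derivs_bounded_by_power \<Omega> U (Suc k) b"
    and "derivs_bounded_by_power \<Omega> (\<lambda>\<epsilon> x. inverse (U \<epsilon> x)) k a"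
  shows "derivs_bounded_by_power \<Omega> (\<lambda>\<epsilon> x. inverse (U \<epsilon> x)) (Suc k) (min a (b + (a + a)))"
proof (rule derivs_bounded_by_power_SucI)
  show "derivs_bounded_by_power \<Omega> (\<lambda>\<epsilon> x. inverse (U \<epsilon> x)) 0 (min a (b + (a + a)))"
    using derivs_bounded_by_power_order_mono[OF assms(4) le0] by (rule derivs_bounded_by_power_exponent_mono) simp
  fix i
  have inv: "eventually_smooth \<Omega> (\<lambda>\<epsilon> x. inverse (U \<epsilon> x))"
    using assms(1,2) by (rule eventually_smooth_inverse)
  have "derivs_bounded_by_power \<Omega> (\<lambda>\<epsilon> x. inverse (U \<epsilon> x) * inverse (U \<epsilon> x)) k (a + a)"
    by (rule derivs_bounded_by_power_mult[OF inv inv assms(4) assms(4)])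
  then have "derivs_bounded_by_power \<Omega>
      (\<lambda>\<epsilon> x. partial i (U \<epsilon>) x * (inverse (U \<epsilon> x) * inverse (U \<epsilon> x))) k (b + (a + a))"
    using eventually_smooth_partial[OF assms(1)] eventually_smooth_mult[OF inv inv]
      derivs_bounded_by_power_partial[OF assms(3)]
    by (rule derivs_bounded_by_power_mult[rotated 3])
  then have "derivs_bounded_by_power \<Omega>
      (\<lambda>\<epsilon> x. (-1) * (partial i (U \<epsilon>) x * (inverse (U \<epsilon> x) * inverse (U \<epsilon> x)))) k (b + (a + a))"
    using eventually_smooth_mult[OF eventually_smooth_partial[OF assms(1)] eventually_smooth_mult[OF inv inv]]
    by (rule derivs_bounded_by_power_cmult[rotated])
  moreover have "\<forall>\<^sub>F \<epsilon> in at_right 0. \<forall>x\<in>\<Omega>.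
      (-1) * (partial i (U \<epsilon>) x * (inverse (U \<epsilon> x) * inverse (U \<epsilon> x))) = partial i (\<lambda>x. inverse (U \<epsilon> x)) x"
    using assms(1) power_bounded_below_nonzero[OF assms(2)] unfolding eventually_smooth_def
  proof eventually_elim
    case (elim \<epsilon>)
    then show ?case
      using partial_inverse[OF smooth_upto_differentiable[OF elim(1)[rule_format, of 0]]] by auto
  qed
  ultimately have "derivs_bounded_by_power \<Omega> (\<lambda>\<epsilon>. partial i (\<lambda>x. inverse (U \<epsilon> x))) k (b + (a + a))"
    by (rule derivs_bounded_by_power_cong[rotated])
  then show "derivs_bounded_by_power \<Omega> (\<lambda>\<epsilon>. partial i (\<lambda>x. inverse (U \<epsilon> x))) k (min a (b + (a + a)))"
    by (rule derivs_bounded_by_power_exponent_mono) simp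
qed

lemma derivs_bounded_by_power_inverse:
  assumes "eventually_smooth \<Omega> U" "power_bounded_below \<Omega> U"
    and "\<forall>k. \<exists>a. derivs_bounded_by_power \<Omega> U k a"
  shows "\<exists>a. derivs_bounded_by_power \<Omega> (\<lambda>\<epsilon> x. inverse (U \<epsilon> x)) k a"
proof (induction k)
  case 0
  show ?case using assms(2) by (rule derivs_bounded_by_power_inverse_0)
next
  case (Suc k)
  then obtain a where "derivs_bounded_by_power \<Omega> (\<lambda>\<epsilon> x. inverse (U \<epsilon> x)) k a" ..
  moreover obtain b where "derivs_bounded_by_power \<Omega> U (Suc k) b"
    using assms(3) by blast
  ultimately show ?case
    using derivs_bounded_by_power_inverse_Suc[OF assms(1,2)] by blast
qed

lemma moderate_add:
  assumes "moderate \<Omega> U" "moderate \<Omega> V"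
  shows "moderate \<Omega> (\<lambda>\<epsilon> x. U \<epsilon> x + V \<epsilon> x)"
  unfolding moderate_iff
proof (intro conjI allI)
  show "eventually_smooth \<Omega> (\<lambda>\<epsilon> x. U \<epsilon> x + V \<epsilon> x)"
    using assms unfolding moderate_iff by (blast intro: eventually_smooth_add)
  fix k
  obtain a b where a: "derivs_bounded_by_power \<Omega> U k a" and b: "derivs_bounded_by_power \<Omega> V k b"
    using assms unfolding moderate_iff by blast
  have "derivs_bounded_by_power \<Omega> U k (min a b)" "derivs_bounded_by_power \<Omega> V k (min a b)"
    by (rule derivs_bounded_by_power_exponent_mono[OF a], simp, rule derivs_bounded_by_power_exponent_mono[OF b], simp)
  then show "\<exists>a. derivs_bounded_by_power \<Omega> (\<lambda>\<epsilon> x. U \<epsilon> x + V \<epsilon> x) k a"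
    using assms unfolding moderate_iff by (blast intro: derivs_bounded_by_power_add)
qed

lemma moderate_cmult: "moderate \<Omega> U \<Longrightarrow> moderate \<Omega> (\<lambda>\<epsilon> x. c * U \<epsilon> x)"
  unfolding moderate_iff by (blast intro: eventually_smooth_cmult derivs_bounded_by_power_cmult)

lemma moderate_mult: "moderate \<Omega> U \<Longrightarrow> moderate \<Omega> V \<Longrightarrow> moderate \<Omega> (\<lambda>\<epsilon> x. U \<epsilon> x * V \<epsilon> x)"
  unfolding moderate_iff by (blast intro: eventually_smooth_mult derivs_bounded_by_power_mult)

lemma moderate_inverse:
  assumes "moderate \<Omega> U" "power_bounded_below \<Omega> U"
  shows "moderate \<Omega> (\<lambda>\<epsilon> x. inverse (U \<epsilon> x))"
proof -
  have "eventually_smooth \<Omega> U" "\<forall>k. \<exists>a. derivs_bounded_by_power \<Omega> U k a"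
    using assms(1) unfolding moderate_iff by blast+
  then show ?thesis
    unfolding moderate_iff
    using eventually_smooth_inverse derivs_bounded_by_power_inverse assms(2) by blast
qed

lemma moderate_sum:
  "finite S \<Longrightarrow> (\<And>s. s \<in> S \<Longrightarrow> moderate \<Omega> (F s)) \<Longrightarrow> moderate \<Omega> (\<lambda>\<epsilon> x. \<Sum>s\<in>S. F s \<epsilon> x)"
  by (induction S rule: finite_induct) (simp_all add: moderate_const moderate_add)

lemma moderate_power: "moderate \<Omega> U \<Longrightarrow> moderate \<Omega> (\<lambda>\<epsilon> x. U \<epsilon> x ^ k)"
  by (induction k) (simp_all add: moderate_const moderate_mult)

lemma moderate_power_int:
  "moderate \<Omega> U \<Longrightarrow> power_bounded_below \<Omega> U \<Longrightarrow> moderate \<Omega> (\<lambda>\<epsilon> x. power_int (U \<epsilon> x) n)"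
  by (cases "0 \<le> n") (simp_all add: power_int_def moderate_power moderate_inverse)

lemma moderate_uminus: "moderate \<Omega> U \<Longrightarrow> moderate \<Omega> (\<lambda>\<epsilon> x. - U \<epsilon> x)"
  using moderate_cmult[of U "-1"] by simp

lemma negligible_add:
  assumes "negligible \<Omega> U" "negligible \<Omega> V"
  shows "negligible \<Omega> (\<lambda>\<epsilon> x. U \<epsilon> x + V \<epsilon> x)"
proof -
  have "eventually_smooth \<Omega> U" "eventually_smooth \<Omega> V"
    using assms unfolding negligible_iff moderate_iff by blast+
  then show ?thesis
    using assms unfolding negligible_iff by (blast intro: moderate_add derivs_bounded_by_power_add)
qed

lemma negligible_cmult:
  assumes "negligible \<Omega> U"
  shows "negligible \<Omega> (\<lambda>\<epsilon> x. c * U \<epsilon> x)"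
proof -
  have "eventually_smooth \<Omega> U"
    using assms unfolding negligible_iff moderate_iff by blast
  then show ?thesis
    using assms unfolding negligible_iff by (blast intro: moderate_cmult derivs_bounded_by_power_cmult)
qed

lemma negligible_mult:
  assumes "negligible \<Omega> U" "moderate \<Omega> V"
  shows "negligible \<Omega> (\<lambda>\<epsilon> x. U \<epsilon> x * V \<epsilon> x)"
  unfolding negligible_iff
proof (intro conjI allI)
  have U: "moderate \<Omega> U" "\<And>k a. derivs_bounded_by_power \<Omega> U k a"
    using assms(1) unfolding negligible_iff by blast+
  show "moderate \<Omega> (\<lambda>\<epsilon> x. U \<epsilon> x * V \<epsilon> x)"
    using U(1) assms(2) by (rule moderate_mult)
  fix k a
  obtain b where "derivs_bounded_by_power \<Omega> V k b"
    using assms(2) unfolding moderate_iff by blast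
  then have "derivs_bounded_by_power \<Omega> (\<lambda>\<epsilon> x. U \<epsilon> x * V \<epsilon> x) k ((a - b) + b)"
    using U assms(2) unfolding moderate_iff by (blast intro: derivs_bounded_by_power_mult)
  then show "derivs_bounded_by_power \<Omega> (\<lambda>\<epsilon> x. U \<epsilon> x * V \<epsilon> x) k a"
    by simp
qed

lemma negligible_cong:
  assumes "\<forall>\<^sub>F \<epsilon> in at_right 0. \<forall>x\<in>\<Omega>. U \<epsilon> x = V \<epsilon> x" "negligible \<Omega> U"
  shows "negligible \<Omega> V"
proof -
  have "eventually_smooth \<Omega> U"
    using assms(2) unfolding negligible_iff moderate_iff by blast
  with assms(1) have "eventually_smooth \<Omega> V"
    unfolding eventually_smooth_def
    by eventually_elim (blast intro: smooth_upto_cong[OF open_\<Omega>])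
  then show ?thesis
    using assms derivs_bounded_by_power_cong unfolding negligible_iff moderate_iff by blast
qed

lemma gequiv_sym: "gequiv \<Omega> U V \<Longrightarrow> gequiv \<Omega> V U"
  unfolding gequiv_def using negligible_cmult[of "\<lambda>\<epsilon> x. U \<epsilon> x - V \<epsilon> x" "-1"] by simp

lemma gequiv_add:
  assumes "gequiv \<Omega> U U'" "gequiv \<Omega> V V'"
  shows "gequiv \<Omega> (\<lambda>\<epsilon> x. U \<epsilon> x + V \<epsilon> x) (\<lambda>\<epsilon> x. U' \<epsilon> x + V' \<epsilon> x)"
proof -
  have "negligible \<Omega> (\<lambda>\<epsilon> x. (U \<epsilon> x - U' \<epsilon> x) + (V \<epsilon> x - V' \<epsilon> x))"
    using assms unfolding gequiv_def by (rule negligible_add)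
  then show ?thesis
    unfolding gequiv_def by (simp add: algebra_simps)
qed

lemma gequiv_uminus: "gequiv \<Omega> U U' \<Longrightarrow> gequiv \<Omega> (\<lambda>\<epsilon> x. - U \<epsilon> x) (\<lambda>\<epsilon> x. - U' \<epsilon> x)"
  unfolding gequiv_def using negligible_cmult[of "\<lambda>\<epsilon> x. U \<epsilon> x - U' \<epsilon> x" "-1"] by simp

lemma gequiv_mult:
  assumes "moderate \<Omega> U'" "moderate \<Omega> V" "gequiv \<Omega> U U'" "gequiv \<Omega> V V'"
  shows "gequiv \<Omega> (\<lambda>\<epsilon> x. U \<epsilon> x * V \<epsilon> x) (\<lambda>\<epsilon> x. U' \<epsilon> x * V' \<epsilon> x)"
proof -
  have "negligible \<Omega> (\<lambda>\<epsilon> x. (U \<epsilon> x - U' \<epsilon> x) * V \<epsilon> x + (V \<epsilon> x - V' \<epsilon> x) * U' \<epsilon> x)"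
    using assms unfolding gequiv_def by (intro negligible_add negligible_mult)
  then show ?thesis
    unfolding gequiv_def by (simp add: algebra_simps)
qed

lemma gequiv_partial:
  assumes "moderate \<Omega> U" "moderate \<Omega> U'" "gequiv \<Omega> U U'"
  shows "gequiv \<Omega> (\<lambda>\<epsilon>. partial i (U \<epsilon>)) (\<lambda>\<epsilon>. partial i (U' \<epsilon>))"
  unfolding gequiv_def
proof (rule negligible_cong)
  show "negligible \<Omega> (\<lambda>\<epsilon>. partial i (\<lambda>x. U \<epsilon> x - U' \<epsilon> x))"
    using assms(3) unfolding gequiv_def by (rule negligible_partial)
  have "eventually_smooth \<Omega> U" "eventually_smooth \<Omega> U'"
    using assms(1,2) unfolding moderate_iff by blast+
  then show "\<forall>\<^sub>F \<epsilon> in at_right 0. \<forall>x\<in>\<Omega>.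
      partial i (\<lambda>x. U \<epsilon> x - U' \<epsilon> x) x = partial i (U \<epsilon>) x - partial i (U' \<epsilon>) x"
    unfolding eventually_smooth_def
    by eventually_elim (blast intro: partial_diff smooth_upto_differentiable)
qed

lemma gequiv_inverse:
  assumes "moderate \<Omega> U" "moderate \<Omega> U'" "power_bounded_below \<Omega> U" "power_bounded_below \<Omega> U'"
    and "gequiv \<Omega> U U'"
  shows "gequiv \<Omega> (\<lambda>\<epsilon> x. inverse (U \<epsilon> x)) (\<lambda>\<epsilon> x. inverse (U' \<epsilon> x))"
  unfolding gequiv_def
proof (rule negligible_cong)
  show "negligible \<Omega> (\<lambda>\<epsilon> x. (U' \<epsilon> x - U \<epsilon> x) * (inverse (U \<epsilon> x) * inverse (U' \<epsilon> x)))"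
    using gequiv_sym[OF assms(5)] assms(1-4) unfolding gequiv_def
    by (intro negligible_mult moderate_mult moderate_inverse)
  show "\<forall>\<^sub>F \<epsilon> in at_right 0. \<forall>x\<in>\<Omega>.
      (U' \<epsilon> x - U \<epsilon> x) * (inverse (U \<epsilon> x) * inverse (U' \<epsilon> x)) = inverse (U \<epsilon> x) - inverse (U' \<epsilon> x)"
    using power_bounded_below_nonzero[OF assms(3)] power_bounded_below_nonzero[OF assms(4)]
    by eventually_elim (simp add: field_simps)
qed

lemma gequiv_power:
  assumes "moderate \<Omega> U" "moderate \<Omega> U'" "gequiv \<Omega> U U'"
  shows "gequiv \<Omega> (\<lambda>\<epsilon> x. U \<epsilon> x ^ k) (\<lambda>\<epsilon> x. U' \<epsilon> x ^ k)"
proof (induction k)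
  case 0
  then show ?case by (simp add: gequiv_refl)
next
  case (Suc k)
  then show ?case
    using gequiv_mult[OF assms(2) moderate_power[OF assms(1)] assms(3)] by simp
qed

lemma gequiv_power_int:
  assumes "moderate \<Omega> U" "moderate \<Omega> U'" "power_bounded_below \<Omega> U" "power_bounded_below \<Omega> U'"
    and "gequiv \<Omega> U U'"
  shows "gequiv \<Omega> (\<lambda>\<epsilon> x. power_int (U \<epsilon> x) n) (\<lambda>\<epsilon> x. power_int (U' \<epsilon> x) n)"
proof (cases "n \<ge> 0")
  case True
  then show ?thesis
    using gequiv_power[OF assms(1,2,5)] by (simp add: power_int_def)
next
  case False
  have "gequiv \<Omega> (\<lambda>\<epsilon> x. inverse (U \<epsilon> x) ^ nat (- n)) (\<lambda>\<epsilon> x. inverse (U' \<epsilon> x) ^ nat (- n))"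
    using assms by (intro gequiv_power gequiv_inverse moderate_inverse)
  then show ?thesis
    using False by (simp add: power_int_def)
qed

lemma gequiv_sum:
  "finite S \<Longrightarrow> (\<And>s. s \<in> S \<Longrightarrow> gequiv \<Omega> (F s) (G s)) \<Longrightarrow>
    gequiv \<Omega> (\<lambda>\<epsilon> x. \<Sum>s\<in>S. F s \<epsilon> x) (\<lambda>\<epsilon> x. \<Sum>s\<in>S. G s \<epsilon> x)"
  by (induction S rule: finite_induct) (simp_all add: gequiv_refl gequiv_add)

lemma moderate_semilin_op:
  assumes "admissible_coeffs \<Omega> K a b" "moderate \<Omega> w" "power_bounded_below \<Omega> w"
  shows "moderate \<Omega> (\<lambda>\<epsilon>. semilin_op K ns a b \<epsilon> (w \<epsilon>))"
proof -
  have "moderate \<Omega> (\<lambda>\<epsilon> x. \<Sum>i\<in>UNIV. \<Sum>j\<in>UNIV. partial i (\<lambda>y. a i j \<epsilon> y * partial j (w \<epsilon>) y) x)"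
    using assms(1,2) unfolding admissible_coeffs_def
    by (intro moderate_sum moderate_partial moderate_mult) auto
  moreover have "moderate \<Omega> (\<lambda>\<epsilon> x. \<Sum>l\<in>{1..K}. b l \<epsilon> x * power_int (w \<epsilon> x) (ns l))"
    using assms unfolding admissible_coeffs_def
    by (intro moderate_sum moderate_mult moderate_power_int) auto
  ultimately show ?thesis
    unfolding semilin_op_eq by (intro moderate_add moderate_uminus)
qed

lemma gequiv_semilin_op:
  assumes "admissible_coeffs \<Omega> K a b" "admissible_coeffs \<Omega> K a' b'" "op_equiv \<Omega> K a b a' b'"
    and u: "moderate \<Omega> u" "power_bounded_below \<Omega> u"
    and v: "moderate \<Omega> v" "power_bounded_below \<Omega> v" "gequiv \<Omega> v u"
  shows "gequiv \<Omega> (\<lambda>\<epsilon>. semilin_op K ns a' b' \<epsilon> (v \<epsilon>)) (\<lambda>\<epsilon>. semilin_op K ns a b \<epsilon> (u \<epsilon>))"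
proof -
  have a: "moderate \<Omega> (a i j)" "moderate \<Omega> (a' i j)" "gequiv \<Omega> (a' i j) (a i j)" for i j
    using assms(1-3) gequiv_sym unfolding admissible_coeffs_def op_equiv_def by blast+
  have b: "moderate \<Omega> (b l)" "moderate \<Omega> (b' l)" "gequiv \<Omega> (b' l) (b l)" if "l \<in> {1..K}" for l
    using assms(1-3) gequiv_sym that unfolding admissible_coeffs_def op_equiv_def by blast+
  have "gequiv \<Omega> (\<lambda>\<epsilon> x. \<Sum>i\<in>UNIV. \<Sum>j\<in>UNIV. partial i (\<lambda>y. a' i j \<epsilon> y * partial j (v \<epsilon>) y) x)
      (\<lambda>\<epsilon> x. \<Sum>i\<in>UNIV. \<Sum>j\<in>UNIV. partial i (\<lambda>y. a i j \<epsilon> y * partial j (u \<epsilon>) y) x)"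
    using a u v by (intro gequiv_sum gequiv_partial gequiv_mult moderate_mult moderate_partial) auto
  moreover have "gequiv \<Omega> (\<lambda>\<epsilon> x. \<Sum>l\<in>{1..K}. b' l \<epsilon> x * power_int (v \<epsilon> x) (ns l))
      (\<lambda>\<epsilon> x. \<Sum>l\<in>{1..K}. b l \<epsilon> x * power_int (u \<epsilon> x) (ns l))"
    using b u v by (intro gequiv_sum gequiv_mult gequiv_power_int moderate_power_int) auto
  ultimately show ?thesis
    unfolding semilin_op_eq by (intro gequiv_add gequiv_uminus)
qed

end

theorem proposition3p10:
  fixes \<Omega> :: "(real^'n::finite) set"
    and K :: nat and ns :: "nat \<Rightarrow> int"
    and a :: "'n \<Rightarrow> 'n \<Rightarrow> real \<Rightarrow> real^'n \<Rightarrow> real"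
    and b :: "nat \<Rightarrow> real \<Rightarrow> real^'n \<Rightarrow> real"
    and u :: "real \<Rightarrow> real^'n \<Rightarrow> real"
  assumes "open \<Omega>" and "bounded \<Omega>"
    and "admissible_coeffs \<Omega> K a b"
    and "moderate \<Omega> u"
    and "\<forall>v. moderate \<Omega> v \<and> gequiv \<Omega> v u \<longrightarrow>
           (\<exists>\<epsilon>0\<in>{0<..1}. \<exists>C>0. \<exists>m::nat. \<forall>\<epsilon>\<in>{0<..<\<epsilon>0}. \<forall>x\<in>\<Omega>. \<bar>v \<epsilon> x\<bar> \<ge> C * \<epsilon> ^ m)"
  shows "moderate \<Omega> (\<lambda>\<epsilon>. semilin_op K ns a b \<epsilon> (u \<epsilon>)) \<and>
         (\<forall>a' b' v. admissible_coeffs \<Omega> K a' b' \<and> op_equiv \<Omega> K a b a' b' \<and>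
            moderate \<Omega> v \<and> gequiv \<Omega> v u \<longrightarrow>
            gequiv \<Omega> (\<lambda>\<epsilon>. semilin_op K ns a' b' \<epsilon> (v \<epsilon>))
                     (\<lambda>\<epsilon>. semilin_op K ns a b \<epsilon> (u \<epsilon>)))"
proof -
  have lower: "power_bounded_below \<Omega> v" if "moderate \<Omega> v" "gequiv \<Omega> v u" for v
    using assms(5) that by (blast intro: power_bounded_belowI)
  have u: "power_bounded_below \<Omega> u"
    using lower[OF assms(4) gequiv_refl] .
  show ?thesis
  proof (intro conjI allI impI)
    show "moderate \<Omega> (\<lambda>\<epsilon>. semilin_op K ns a b \<epsilon> (u \<epsilon>))"
      using assms(1-4) u by (rule moderate_semilin_op)
    fix a' b' v
    assume "admissible_coeffs \<Omega> K a' b' \<and> op_equiv \<Omega> K a b a' b' \<and> moderate \<Omega> v \<and> gequiv \<Omega> v u"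
    then show "gequiv \<Omega> (\<lambda>\<epsilon>. semilin_op K ns a' b' \<epsilon> (v \<epsilon>)) (\<lambda>\<epsilon>. semilin_op K ns a b \<epsilon> (u \<epsilon>))"
      using assms(1-4) u lower by (intro gequiv_semilin_op) auto
  qed
qed

end
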